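(* Let $f,g$ satisfy the standing assumptions below and let $\beta>0$. Suppose $\beta\ge\frac{M_fQ_g}{\mu^3}$ and $\Phi(x):=f(x,y^*(x))$ is bounded below on $\mathbb{R}^n$. Then $h(x,y)$ is bounded below on $\mathbb{R}^n\times\mathbb{R}^p$.
   Context: Standing assumptions. (A1) Constants $M_f,\mu,L_g,Q_g>0$ exist such that: $f:\mathbb{R}^n\times\mathbb{R}^p\to\mathbb{R}$ is $M_f$-Lipschitz; $g$ is twice differentiable with $\nabla^2_{yy}g\succeq\mu I_p$; $\nabla g$ is $L_g$-Lipschitz; $\nabla^2_{yy}g,\nabla^2_{xy}g$ are $Q_g$-Lipschitz; $\nabla^2_{yy}g$ is continuously differentiable. (A2) $f$ is a potential function of a conservative field $\mathcal{D}_f$ with compact convex values of norm at most $M_f$. Notation: $y^*(x):=\arg\min_{y\in\mathbb{R}^p}g(x,y)$ (unique); $\mathcal{A}(x,y):=y-\nabla^2_{yy}g(x,y)^{-1}\nabla_yg(x,y)$; $h(x,y):=f(x,\mathcal{A}(x,y))+\frac\beta2\|\nabla_yg(x,y)\|^2$. *)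

theory Defs
  imports "HOL-Analysis.Analysis"
begin

definition grad :: "('a::real_inner \<Rightarrow> real) \<Rightarrow> 'a \<Rightarrow> 'a" where
  "grad g z = (THE v. (g has_derivative (\<lambda>h. v \<bullet> h)) (at z))"

definition hess :: "('a::real_inner \<Rightarrow> real) \<Rightarrow> 'a \<Rightarrow> 'a \<Rightarrow> 'a" where
  "hess g z = (THE L. (grad g has_derivative L) (at z))"

definition twice_differentiable :: "('a::real_inner \<Rightarrow> real) \<Rightarrow> bool" where
  "twice_differentiable g \<longleftrightarrow>
     (\<forall>z. g differentiable (at z)) \<and> (\<forall>z. grad g differentiable (at z))"

definition grad_y :: "((real^'n) \<times> (real^'p) \<Rightarrow> real) \<Rightarrow> real^'n \<Rightarrow> real^'p \<Rightarrow> real^'p" where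
  "grad_y g x y = snd (grad g (x, y))"

definition hess_yy :: "((real^'n) \<times> (real^'p) \<Rightarrow> real) \<Rightarrow> real^'n \<Rightarrow> real^'p \<Rightarrow> real^'p^'p" where
  "hess_yy g x y = matrix (\<lambda>v. snd (hess g (x, y) (0, v)))"

definition hess_xy :: "((real^'n) \<times> (real^'p) \<Rightarrow> real) \<Rightarrow> real^'n \<Rightarrow> real^'p \<Rightarrow> real^'n^'p" where
  "hess_xy g x y = matrix (\<lambda>u. snd (hess g (x, y) (u, 0)))"

definition ystar :: "((real^'n) \<times> (real^'p) \<Rightarrow> real) \<Rightarrow> real^'n \<Rightarrow> real^'p" where
  "ystar g x = (THE y. \<forall>y'. g (x, y) \<le> g (x, y'))"

definition Aop :: "((real^'n) \<times> (real^'p) \<Rightarrow> real) \<Rightarrow> real^'n \<Rightarrow> real^'p \<Rightarrow> real^'p" where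
  "Aop g x y = y - matrix_inv (hess_yy g x y) *v grad_y g x y"

definition hfun :: "((real^'n) \<times> (real^'p) \<Rightarrow> real) \<Rightarrow> ((real^'n) \<times> (real^'p) \<Rightarrow> real) \<Rightarrow> real
                    \<Rightarrow> real^'n \<Rightarrow> real^'p \<Rightarrow> real" where
  "hfun f g \<beta> x y = f (x, Aop g x y) + \<beta> / 2 * (norm (grad_y g x y))\<^sup>2"

definition abs_continuous_on :: "real set \<Rightarrow> (real \<Rightarrow> 'a::real_normed_vector) \<Rightarrow> bool" where
  "abs_continuous_on S \<gamma> \<longleftrightarrow>
     (\<forall>\<epsilon>>0. \<exists>\<delta>>0. \<forall>(n::nat) a b.
        (\<forall>i<n. a i \<le> b i \<and> a i \<in> S \<and> b i \<in> S) \<and>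
        (\<forall>i<n. \<forall>j<n. i \<noteq> j \<longrightarrow> b i \<le> a j \<or> b j \<le> a i) \<and>
        (\<Sum>i<n. b i - a i) < \<delta>
        \<longrightarrow> (\<Sum>i<n. norm (\<gamma> (b i) - \<gamma> (a i))) < \<epsilon>)"

definition conservative_field :: "('a::euclidean_space \<Rightarrow> 'a set) \<Rightarrow> bool" where
  "conservative_field D \<longleftrightarrow>
     closed {(z, v). v \<in> D z} \<and>
     (\<forall>z. D z \<noteq> {} \<and> compact (D z)) \<and>
     (\<forall>\<gamma>. abs_continuous_on {0..1} \<gamma> \<and> \<gamma> 0 = \<gamma> 1 \<longrightarrow>
        ((\<lambda>t. Sup ((\<lambda>v. vector_derivative \<gamma> (at t within {0..1}) \<bullet> v) ` D (\<gamma> t)))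
           has_integral 0) {0..1})"

definition potential_of :: "('a::euclidean_space \<Rightarrow> real) \<Rightarrow> ('a \<Rightarrow> 'a set) \<Rightarrow> bool" where
  "potential_of f D \<longleftrightarrow>
     conservative_field D \<and>
     (\<forall>\<gamma>. abs_continuous_on {0..1} \<gamma> \<longrightarrow>
        ((\<lambda>t. Sup ((\<lambda>v. vector_derivative \<gamma> (at t within {0..1}) \<bullet> v) ` D (\<gamma> t)))
           has_integral (f (\<gamma> 1) - f (\<gamma> 0))) {0..1})"

end

(* For fixed x the map g(x,-) is mu-strongly convex, so it has a unique minimiser y*(x), and
   strong monotonicity of grad_y g gives the error bound |y - y*(x)| <= |grad_y g(x,y)| / mu.
   Coercivity of the Hessian gives the same bound for the Newton step hess_yy^-1 grad_y g, hence
   |A(x,y) - y*(x)| <= 2t/mu with t = |grad_y g(x,y)|.  Since f is M_f-Lipschitz,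
     h(x,y) >= Phi(x) - (2 M_f / mu) t + beta/2 t^2 >= Phi(x) - 2 M_f^2 / (mu^2 beta). *)
theory Submission
  imports Defs
begin

lemma has_derivative_grad:
  fixes g :: "'a::euclidean_space \<Rightarrow> real"
  assumes "g differentiable (at z)"
  shows "(g has_derivative (\<lambda>h. grad g z \<bullet> h)) (at z)"
proof -
  obtain D where D: "(g has_derivative D) (at z)"
    using assms differentiable_def by blast
  define v where "v = adjoint D 1"
  have Dv: "D = (\<lambda>h. v \<bullet> h)"
    using adjoint_works[OF has_derivative_linear[OF D], of _ 1] by (auto simp: v_def inner_commute)
  have "grad g z = v" unfolding grad_def
  proof (rule the_equality)
    show "(g has_derivative (\<lambda>h. v \<bullet> h)) (at z)" using D Dv by simp
  next
    fix w assume "(g has_derivative (\<lambda>h. w \<bullet> h)) (at z)"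
    then have "(\<lambda>h. w \<bullet> h) = (\<lambda>h. v \<bullet> h)" using D Dv has_derivative_unique by blast
    then have "w \<bullet> (w - v) = v \<bullet> (w - v)" by metis
    then have "(w - v) \<bullet> (w - v) = 0" by (simp add: inner_diff_left)
    then show "w = v" by simp
  qed
  then show ?thesis using D Dv by simp
qed

lemma has_derivative_hess:
  fixes g :: "'a::euclidean_space \<Rightarrow> real"
  assumes "grad g differentiable (at z)"
  shows "(grad g has_derivative hess g z) (at z)"
proof -
  obtain D where D: "(grad g has_derivative D) (at z)"
    using assms differentiable_def by blast
  show ?thesis unfolding hess_def
    by (rule theI[of _ D]) (use D has_derivative_unique in auto)
qed

lemma has_derivative_grad_y:
  fixes g :: "(real^'n) \<times> (real^'p) \<Rightarrow> real"
  assumes "g differentiable (at (x, y))"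
  shows "((\<lambda>y. g (x, y)) has_derivative (\<lambda>v. grad_y g x y \<bullet> v)) (at y)"
proof -
  have "((\<lambda>y. (x, y)) has_derivative (\<lambda>v. (0, v))) (at y)"
    by (auto intro!: derivative_eq_intros)
  from has_derivative_compose[OF this has_derivative_grad[OF assms]] show ?thesis
    by (simp add: grad_y_def inner_Pair_0)
qed

lemma has_derivative_grad_y_hess_yy:
  fixes g :: "(real^'n) \<times> (real^'p) \<Rightarrow> real"
  assumes "grad g differentiable (at (x, y))"
  shows "(grad_y g x has_derivative (\<lambda>v. hess_yy g x y *v v)) (at y)"
proof -
  have "((\<lambda>y. (x, y)) has_derivative (\<lambda>v. (0, v))) (at y)"
    by (auto intro!: derivative_eq_intros)
  from has_derivative_snd[OF has_derivative_compose[OF this has_derivative_hess[OF assms]]]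
  have D: "(grad_y g x has_derivative (\<lambda>v. snd (hess g (x, y) (0, v)))) (at y)"
    by (simp add: grad_y_def[abs_def])
  have "(\<lambda>v. hess_yy g x y *v v) = (\<lambda>v. snd (hess g (x, y) (0, v)))"
    unfolding hess_yy_def using has_derivative_linear[OF D] by (simp add: matrix_works)
  then show ?thesis using D by simp
qed

lemma strongly_monotone_if_coercive_derivative:
  fixes F :: "'a::real_inner \<Rightarrow> 'a"
  assumes F': "\<And>y. (F has_derivative F' y) (at y)"
    and coercive: "\<And>y v. \<mu> * (norm v)\<^sup>2 \<le> v \<bullet> F' y v"
  shows "\<mu> * (norm (y' - y))\<^sup>2 \<le> (F y' - F y) \<bullet> (y' - y)"
proof -
  define d where "d = y' - y"
  define \<phi> where "\<phi> t = F (y + t *\<^sub>R d) \<bullet> d - t * (\<mu> * (norm d)\<^sup>2)" for t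
  have "\<phi> 0 \<le> \<phi> 1"
  proof (rule DERIV_nonneg_imp_nondecreasing[of 0 1 \<phi>])
    fix t :: real
    let ?z = "y + t *\<^sub>R d"
    have "((\<lambda>t. y + t *\<^sub>R d) has_derivative (\<lambda>s. s *\<^sub>R d)) (at t)"
      by (auto intro!: derivative_eq_intros)
    from has_derivative_compose[OF this F']
    have "(\<phi> has_derivative (\<lambda>s. F' ?z (s *\<^sub>R d) \<bullet> d - s * (\<mu> * (norm d)\<^sup>2))) (at t)"
      unfolding \<phi>_def[abs_def] by (auto intro!: derivative_eq_intros)
    moreover have "(\<lambda>s. F' ?z (s *\<^sub>R d) \<bullet> d - s * (\<mu> * (norm d)\<^sup>2))
        = (\<lambda>s. s * (F' ?z d \<bullet> d - \<mu> * (norm d)\<^sup>2))"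
      using linear_scale[OF has_derivative_linear[OF F']] by (auto simp: algebra_simps)
    ultimately have "DERIV \<phi> t :> F' ?z d \<bullet> d - \<mu> * (norm d)\<^sup>2"
      by (simp add: has_field_derivative_def mult_commute_abs)
    moreover have "F' ?z d \<bullet> d - \<mu> * (norm d)\<^sup>2 \<ge> 0"
      using coercive[of d ?z] by (simp add: inner_commute)
    ultimately show "\<exists>D. DERIV \<phi> t :> D \<and> D \<ge> 0" by blast
  qed simp
  then show ?thesis by (simp add: \<phi>_def d_def inner_diff_left)
qed

lemma strongly_convex_lower_bound:
  fixes G :: "'a::real_inner \<Rightarrow> real"
  assumes G': "\<And>y. (G has_derivative (\<lambda>v. G' y \<bullet> v)) (at y)"
    and mono: "\<And>y1 y2. \<mu> * (norm (y2 - y1))\<^sup>2 \<le> (G' y2 - G' y1) \<bullet> (y2 - y1)"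
  shows "G y + G' y \<bullet> d + \<mu> / 2 * (norm d)\<^sup>2 \<le> G (y + d)"
proof -
  define \<psi> where "\<psi> t = G (y + t *\<^sub>R d) - t * (G' y \<bullet> d) - \<mu> / 2 * t\<^sup>2 * (norm d)\<^sup>2" for t
  have "\<psi> 0 \<le> \<psi> 1"
  proof (rule DERIV_nonneg_imp_nondecreasing[of 0 1 \<psi>])
    fix t :: real
    assume "0 \<le> t"
    let ?D = "G' (y + t *\<^sub>R d) \<bullet> d - G' y \<bullet> d - \<mu> * t * (norm d)\<^sup>2"
    have "((\<lambda>t. y + t *\<^sub>R d) has_derivative (\<lambda>s. s *\<^sub>R d)) (at t)"
      by (auto intro!: derivative_eq_intros)
    from has_derivative_compose[OF this G']
    have "(\<psi> has_derivative (\<lambda>s. s * ?D)) (at t)"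
      unfolding \<psi>_def[abs_def] by (auto intro!: derivative_eq_intros simp: algebra_simps)
    then have "DERIV \<psi> t :> ?D"
      by (simp add: has_field_derivative_def mult_commute_abs)
    moreover have "t * (\<mu> * t * (norm d)\<^sup>2) \<le> t * (G' (y + t *\<^sub>R d) \<bullet> d - G' y \<bullet> d)"
      using mono[of y "y + t *\<^sub>R d"]
      by (simp add: inner_diff_left power2_eq_square algebra_simps)
    then have "?D \<ge> 0"
      using \<open>0 \<le> t\<close> by (cases "t = 0") (simp_all add: mult_le_cancel_left)
    ultimately show "\<exists>D. DERIV \<psi> t :> D \<and> D \<ge> 0" by blast
  qed simp
  then show ?thesis by (simp add: \<psi>_def)
qed

lemma strongly_convex_has_minimizer:
  fixes G :: "'a::euclidean_space \<Rightarrow> real"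
  assumes G': "\<And>y. (G has_derivative (\<lambda>v. G' y \<bullet> v)) (at y)"
    and mono: "\<And>y1 y2. \<mu> * (norm (y2 - y1))\<^sup>2 \<le> (G' y2 - G' y1) \<bullet> (y2 - y1)"
    and "\<mu> > 0"
  shows "\<exists>y0. \<forall>y. G y0 \<le> G y"
proof -
  define R where "R = 2 * norm (G' 0) / \<mu>"
  have "continuous_on (cball 0 R) G"
    using has_derivative_continuous[OF G'] by (simp add: continuous_at_imp_continuous_on)
  moreover have "0 \<in> cball 0 R"
    using \<open>\<mu> > 0\<close> by (simp add: R_def)
  ultimately obtain y0 where y0: "\<And>y. y \<in> cball 0 R \<Longrightarrow> G y0 \<le> G y"
    using continuous_attains_inf[OF compact_cball] by blast
  have "G y0 \<le> G y" for y
  proof (cases "norm y \<le> R")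
    case True
    then show ?thesis using y0 by simp
  next
    case False
    \<comment> \<open>Outside the ball the quadratic term beats the linear one, so \<open>G y \<ge> G 0\<close>.\<close>
    then have "2 * norm (G' 0) \<le> \<mu> * norm y"
      using \<open>\<mu> > 0\<close> by (simp add: R_def field_simps)
    from mult_right_mono[OF this norm_ge_zero]
    have "norm (G' 0) * norm y \<le> \<mu> / 2 * (norm y)\<^sup>2"
      by (simp add: power2_eq_square algebra_simps)
    moreover have "- (norm (G' 0) * norm y) \<le> G' 0 \<bullet> y"
      using norm_cauchy_schwarz[of "G' 0" y] Cauchy_Schwarz_ineq2[of "G' 0" y] by linarith
    moreover have "G 0 + G' 0 \<bullet> y + \<mu> / 2 * (norm y)\<^sup>2 \<le> G y"
      using strongly_convex_lower_bound[OF G' mono, of 0 y] by simp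
    moreover have "G y0 \<le> G 0"
      using y0 \<open>0 \<in> cball 0 R\<close> by blast
    ultimately show ?thesis by linarith
  qed
  then show ?thesis by blast
qed

lemma grad_eq_0_at_minimum:
  fixes G :: "'a::real_inner \<Rightarrow> real"
  assumes "(G has_derivative (\<lambda>v. u \<bullet> v)) (at y)"
    and "\<forall>y'. G y \<le> G y'"
  shows "u = 0"
proof -
  have "(\<lambda>v. u \<bullet> v) = (\<lambda>v. 0)"
    by (rule differential_zero_maxmin[of y UNIV G]) (use assms in auto)
  then have "u \<bullet> u = 0" by metis
  then show ?thesis by simp
qed

lemma grad_y_strongly_monotone:
  fixes g :: "(real^'n) \<times> (real^'p) \<Rightarrow> real"
  assumes "twice_differentiable g"
    and "\<And>x y v. v \<bullet> (hess_yy g x y *v v) \<ge> \<mu> * (norm v)\<^sup>2"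
  shows "\<mu> * (norm (y' - y))\<^sup>2 \<le> (grad_y g x y' - grad_y g x y) \<bullet> (y' - y)"
proof (rule strongly_monotone_if_coercive_derivative[where F' = "\<lambda>y v. hess_yy g x y *v v"])
  show "(grad_y g x has_derivative (\<lambda>v. hess_yy g x z *v v)) (at z)" for z
    using assms(1) has_derivative_grad_y_hess_yy unfolding twice_differentiable_def by blast
qed (rule assms(2))

lemma ystar_minimizes:
  fixes g :: "(real^'n) \<times> (real^'p) \<Rightarrow> real"
  assumes tw: "twice_differentiable g"
    and strong: "\<And>x y v. v \<bullet> (hess_yy g x y *v v) \<ge> \<mu> * (norm v)\<^sup>2"
    and "\<mu> > 0"
  shows "g (x, ystar g x) \<le> g (x, y)"
proof -
  have G': "((\<lambda>y. g (x, y)) has_derivative (\<lambda>v. grad_y g x y \<bullet> v)) (at y)" for y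
    using tw has_derivative_grad_y unfolding twice_differentiable_def by blast
  note mono = grad_y_strongly_monotone[OF tw strong]
  have "\<exists>!y. \<forall>y'. g (x, y) \<le> g (x, y')"
  proof (rule ex_ex1I)
    show "\<exists>y. \<forall>y'. g (x, y) \<le> g (x, y')"
      by (rule strongly_convex_has_minimizer[OF G' mono \<open>\<mu> > 0\<close>])
  next
    fix y1 y2
    assume "\<forall>y'. g (x, y1) \<le> g (x, y')" "\<forall>y'. g (x, y2) \<le> g (x, y')"
    then have "grad_y g x y1 = 0" "grad_y g x y2 = 0"
      using grad_eq_0_at_minimum[OF G'] by blast+
    then have "\<mu> * (norm (y2 - y1))\<^sup>2 \<le> 0"
      using mono[where x = x and y = y1 and y' = y2] by simp
    then show "y1 = y2"
      using \<open>\<mu> > 0\<close> by (simp add: mult_le_0_iff)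
  qed
  then show ?thesis
    unfolding ystar_def by (rule theI'[THEN spec])
qed

lemma grad_y_ystar_eq_0:
  fixes g :: "(real^'n) \<times> (real^'p) \<Rightarrow> real"
  assumes "twice_differentiable g"
    and "\<And>x y v. v \<bullet> (hess_yy g x y *v v) \<ge> \<mu> * (norm v)\<^sup>2"
    and "\<mu> > 0"
  shows "grad_y g x (ystar g x) = 0"
proof (rule grad_eq_0_at_minimum)
  show "((\<lambda>y. g (x, y)) has_derivative (\<lambda>v. grad_y g x (ystar g x) \<bullet> v)) (at (ystar g x))"
    using assms(1) has_derivative_grad_y unfolding twice_differentiable_def by blast
  show "\<forall>y. g (x, ystar g x) \<le> g (x, y)"
    using ystar_minimizes[OF assms] by blast
qed

lemma norm_le_if_coercive_inner:
  fixes w u :: "'a::real_inner"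
  assumes "\<mu> > 0" and "\<mu> * (norm w)\<^sup>2 \<le> w \<bullet> u"
  shows "norm w \<le> norm u / \<mu>"
proof (cases "w = 0")
  case False
  have "norm w * (\<mu> * norm w) \<le> norm w * norm u"
    using assms(2) norm_cauchy_schwarz[of w u] by (simp add: power2_eq_square algebra_simps)
  then have "\<mu> * norm w \<le> norm u"
    using False by simp
  then show ?thesis
    using assms(1) by (simp add: field_simps)
qed (use assms(1) in simp)

lemma norm_sub_ystar_le:
  fixes g :: "(real^'n) \<times> (real^'p) \<Rightarrow> real"
  assumes "twice_differentiable g"
    and "\<And>x y v. v \<bullet> (hess_yy g x y *v v) \<ge> \<mu> * (norm v)\<^sup>2"
    and "\<mu> > 0"
  shows "norm (y - ystar g x) \<le> norm (grad_y g x y) / \<mu>"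
proof -
  have "\<mu> * (norm (y - ystar g x))\<^sup>2 \<le> (y - ystar g x) \<bullet> grad_y g x y"
    using grad_y_strongly_monotone[OF assms(1,2), where x = x and y = "ystar g x" and y' = y]
    by (simp add: grad_y_ystar_eq_0[OF assms] inner_commute)
  then show ?thesis
    by (rule norm_le_if_coercive_inner[OF \<open>\<mu> > 0\<close>])
qed

lemma coercive_matrix_invertible:
  fixes H :: "real^'n^'n"
  assumes "\<mu> > 0" and "\<And>v. \<mu> * (norm v)\<^sup>2 \<le> v \<bullet> (H *v v)"
  shows "invertible H"
proof -
  have "w = 0" if "H *v w = 0" for w
    using assms(2)[of w] that \<open>\<mu> > 0\<close> by (simp add: mult_le_0_iff)
  then show ?thesis
    using matrix_left_invertible_ker invertible_left_inverse by blast
qed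

lemma matrix_inv_right:
  assumes "invertible A"
  shows "A ** matrix_inv A = mat 1"
  using assms unfolding invertible_def matrix_inv_def by (rule someI_ex[THEN conjunct1])

lemma norm_coercive_matrix_inv_le:
  fixes H :: "real^'n^'n"
  assumes "\<mu> > 0" and coercive: "\<And>v. \<mu> * (norm v)\<^sup>2 \<le> v \<bullet> (H *v v)"
  shows "norm (matrix_inv H *v u) \<le> norm u / \<mu>"
proof -
  have "H *v (matrix_inv H *v u) = u"
    using matrix_inv_right[OF coercive_matrix_invertible[OF assms]]
    by (simp add: matrix_vector_mul_assoc)
  then show ?thesis
    using norm_le_if_coercive_inner[OF \<open>\<mu> > 0\<close>] coercive[of "matrix_inv H *v u"] by simp
qed

lemma norm_Aop_sub_ystar_le:
  fixes g :: "(real^'n) \<times> (real^'p) \<Rightarrow> real"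
  assumes "twice_differentiable g"
    and strong: "\<And>x y v. v \<bullet> (hess_yy g x y *v v) \<ge> \<mu> * (norm v)\<^sup>2"
    and "\<mu> > 0"
  shows "norm (Aop g x y - ystar g x) \<le> 2 * norm (grad_y g x y) / \<mu>"
proof -
  have "Aop g x y - ystar g x = (y - ystar g x) - matrix_inv (hess_yy g x y) *v grad_y g x y"
    by (simp add: Aop_def algebra_simps)
  then have "norm (Aop g x y - ystar g x)
      \<le> norm (y - ystar g x) + norm (matrix_inv (hess_yy g x y) *v grad_y g x y)"
    by (simp only: norm_triangle_ineq4)
  also have "\<dots> \<le> norm (grad_y g x y) / \<mu> + norm (grad_y g x y) / \<mu>"
  proof (rule add_mono)
    show "norm (matrix_inv (hess_yy g x y) *v grad_y g x y) \<le> norm (grad_y g x y) / \<mu>"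
      using norm_coercive_matrix_inv_le[OF \<open>\<mu> > 0\<close>] strong by blast
  qed (rule norm_sub_ystar_le[OF assms])
  finally show ?thesis by simp
qed

lemma mult_le_Young_quadratic:
  fixes k t \<beta> :: real
  assumes "\<beta> > 0"
  shows "k * t \<le> \<beta> / 2 * t\<^sup>2 + k\<^sup>2 / (2 * \<beta>)"
proof -
  have "0 \<le> (\<beta> * t - k)\<^sup>2 / (2 * \<beta>)"
    using assms by simp
  also have "\<dots> = \<beta> / 2 * t\<^sup>2 + k\<^sup>2 / (2 * \<beta>) - k * t"
    using assms by (simp add: field_simps power2_eq_square)
  finally show ?thesis by simp
qed

lemma hfun_ge_value_at_ystar:
  fixes f g :: "(real^'n) \<times> (real^'p) \<Rightarrow> real"
  assumes f_lip: "M-lipschitz_on UNIV f"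
    and "twice_differentiable g"
    and "\<And>x y v. v \<bullet> (hess_yy g x y *v v) \<ge> \<mu> * (norm v)\<^sup>2"
    and "\<mu> > 0" and "\<beta> > 0"
  shows "f (x, ystar g x) - (2 * M / \<mu>)\<^sup>2 / (2 * \<beta>) \<le> hfun f g \<beta> x y"
proof -
  define t where "t = norm (grad_y g x y)"
  have "f (x, ystar g x) - f (x, Aop g x y) \<le> M * dist (x, Aop g x y) (x, ystar g x)"
    using lipschitz_onD[OF f_lip] by (simp add: dist_real_def abs_le_iff dist_commute)
  also have "\<dots> \<le> M * (2 * t / \<mu>)"
    using mult_left_mono[OF norm_Aop_sub_ystar_le[OF assms(2-4)] lipschitz_on_nonneg[OF f_lip]]
    by (simp add: dist_Pair_Pair dist_norm t_def)
  also have "\<dots> = (2 * M / \<mu>) * t"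
    by simp
  also have "\<dots> \<le> \<beta> / 2 * t\<^sup>2 + (2 * M / \<mu>)\<^sup>2 / (2 * \<beta>)"
    by (rule mult_le_Young_quadratic[OF \<open>\<beta> > 0\<close>])
  finally show ?thesis
    by (simp add: hfun_def t_def)
qed

theorem proposition3p3:
  fixes f g :: "(real^'n) \<times> (real^'p) \<Rightarrow> real"
    and Df :: "(real^'n) \<times> (real^'p) \<Rightarrow> ((real^'n) \<times> (real^'p)) set"
    and M\<^sub>f \<mu> L\<^sub>g Q\<^sub>g \<beta> :: real
  assumes consts_pos: "M\<^sub>f > 0" "\<mu> > 0" "L\<^sub>g > 0" "Q\<^sub>g > 0"
    and f_lip: "M\<^sub>f-lipschitz_on UNIV f"
    and g_twice: "twice_differentiable g"
    and g_strong: "\<And>x y v. v \<bullet> (hess_yy g x y *v v) \<ge> \<mu> * (norm v)\<^sup>2"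
    and grad_lip: "L\<^sub>g-lipschitz_on UNIV (grad g)"
    and hyy_lip: "\<And>x y x' y'. onorm (\<lambda>v. (hess_yy g x y - hess_yy g x' y') *v v)
                              \<le> Q\<^sub>g * dist (x, y) (x', y')"
    and hxy_lip: "\<And>x y x' y'. onorm (\<lambda>u. (hess_xy g x y - hess_xy g x' y') *v u)
                              \<le> Q\<^sub>g * dist (x, y) (x', y')"
    and hyy_C1: "\<exists>D. (\<forall>z. ((\<lambda>z. hess_yy g (fst z) (snd z)) has_derivative D z) (at z))
                    \<and> continuous_on UNIV (\<lambda>z. Blinfun (D z))"
    and f_pot: "potential_of f Df"
    and Df_vals: "\<And>z. convex (Df z) \<and> (\<forall>v\<in>Df z. norm v \<le> M\<^sub>f)"
    and beta_pos: "\<beta> > 0"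
    and beta_ge: "\<beta> \<ge> M\<^sub>f * Q\<^sub>g / \<mu> ^ 3"
    and Phi_bdd: "\<exists>c. \<forall>x. c \<le> f (x, ystar g x)"
  shows "\<exists>c. \<forall>x y. c \<le> hfun f g \<beta> x y"
proof -
  obtain c where "\<And>x. c \<le> f (x, ystar g x)"
    using Phi_bdd by blast
  then have "c - (2 * M\<^sub>f / \<mu>)\<^sup>2 / (2 * \<beta>) \<le> hfun f g \<beta> x y" for x y
    using hfun_ge_value_at_ystar[OF f_lip g_twice g_strong \<open>\<mu> > 0\<close> beta_pos, of x y]
    by (meson diff_right_mono order_trans)
  then show ?thesis by blast
qed

end
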